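(* Let $t$ and $\Delta_s$ be positive integers and let $G$ be an undirected graph. There exists a $(t\cdot\Delta_s,\Delta_s)$-dissolution for $G$ if and only if $G$ has a $t$-star partition.
   Context: For $V'\subseteq V(G)$ let $Z(V',G):=\{(x,y)\mid x\in V',\ y\in V(G)\setminus V',\ \{x,y\}\in E(G)\}$. For positive integers $s,\Delta_s$, an $(s,\Delta_s)$-dissolution for $G$ is a pair $(D,z)$ with $D\subset V(G)$ and $z\colon Z(D,G)\to\{0,\dots,s\}$ such that (a) each $v'\in D$ satisfies $\sum_{(v',v)\in Z(D,G)} z(v',v)=s$, and (b) each $v\in V(G)\setminus D$ satisfies $\sum_{(v',v)\in Z(D,G)} z(v',v)=\Delta_s$. A $t$-star $K_{1,t}$ is the graph with vertices $v_1,\dots,v_{t+1}$ and edges $\{v_1,v_i\}$, $2\le i\le t+1$. A $t$-star partition of $G$ is a partition of $V(G)$ into sets $V_1,\dots,V_{|V(G)|/(t+1)}$ of size $t+1$ such that each induced subgraph $G[V_i]$ contains a $t$-star as a subgraph. *)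

theory Defs
  imports Main "HOL-Library.Disjoint_Sets"
begin

definition graph :: "'a set \<Rightarrow> 'a set set \<Rightarrow> bool" where
  "graph V E \<longleftrightarrow> finite V \<and> (\<forall>e\<in>E. \<exists>x y. e = {x, y} \<and> x \<noteq> y \<and> x \<in> V \<and> y \<in> V)"

definition Z :: "'a set \<Rightarrow> 'a set \<Rightarrow> 'a set set \<Rightarrow> ('a \<times> 'a) set" where
  "Z V' V E = {(x, y). x \<in> V' \<and> y \<in> V - V' \<and> {x, y} \<in> E}"

definition dissolution :: "'a set \<Rightarrow> 'a set set \<Rightarrow> nat \<Rightarrow> nat \<Rightarrow> 'a set \<Rightarrow> ('a \<Rightarrow> 'a \<Rightarrow> nat) \<Rightarrow> bool" where
  "dissolution V E s \<Delta> D z \<longleftrightarrow>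
     D \<subseteq> V \<and>
     (\<forall>(x, y) \<in> Z D V E. z x y \<le> s) \<and>
     (\<forall>v' \<in> D. (\<Sum>v \<in> {v. (v', v) \<in> Z D V E}. z v' v) = s) \<and>
     (\<forall>v \<in> V - D. (\<Sum>v' \<in> {v'. (v', v) \<in> Z D V E}. z v' v) = \<Delta>)"

definition has_dissolution :: "'a set \<Rightarrow> 'a set set \<Rightarrow> nat \<Rightarrow> nat \<Rightarrow> bool" where
  "has_dissolution V E s \<Delta> \<longleftrightarrow> (\<exists>D z. dissolution V E s \<Delta> D z)"

definition contains_star :: "'a set set \<Rightarrow> nat \<Rightarrow> 'a set \<Rightarrow> bool" where
  "contains_star E t W \<longleftrightarrow> card W = t + 1 \<and> (\<exists>c \<in> W. \<forall>w \<in> W - {c}. {c, w} \<in> E)"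

definition star_partition :: "'a set \<Rightarrow> 'a set set \<Rightarrow> nat \<Rightarrow> 'a set set \<Rightarrow> bool" where
  "star_partition V E t P \<longleftrightarrow> partition_on V P \<and> (\<forall>W \<in> P. contains_star E t W)"

definition has_star_partition :: "'a set \<Rightarrow> 'a set set \<Rightarrow> nat \<Rightarrow> bool" where
  "has_star_partition V E t \<longleftrightarrow> (\<exists>P. star_partition V E t P)"

end

theory Submission imports Defs begin

text \<open>A \<open>(t\<Delta>, \<Delta>)\<close>-dissolution is a fractional assignment of the vertices outside \<open>D\<close>
  to adjacent vertices of \<open>D\<close>: every outside vertex receives weight \<open>\<Delta>\<close> and every vertex of
  \<open>D\<close> sends \<open>t\<Delta>\<close>. Double counting the weight reaching a set \<open>S\<close> of outside vertices gives
  \<open>|S| \<le> t |N(S)|\<close>, so Hall's theorem with capacities \<open>t\<close> turns it into an integral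
  assignment, and since there are exactly \<open>t |D|\<close> outside vertices each vertex of \<open>D\<close> receives
  exactly \<open>t\<close> of them: these are the stars of a partition. Conversely, the centres of a star
  partition form \<open>D\<close>, each sending \<open>\<Delta>\<close> along each of its \<open>t\<close> edges.\<close>

section \<open>Hall's theorem with capacities\<close>

definition neighbourhood :: "'a set \<Rightarrow> ('a \<Rightarrow> 'b \<Rightarrow> bool) \<Rightarrow> 'b set \<Rightarrow> 'a set" where
  "neighbourhood A adj S = {a\<in>A. \<exists>b\<in>S. adj a b}"

definition hall_condition :: "'a set \<Rightarrow> 'b set \<Rightarrow> ('a \<Rightarrow> 'b \<Rightarrow> bool) \<Rightarrow> ('a \<Rightarrow> nat) \<Rightarrow> bool" where
  "hall_condition A B adj c \<longleftrightarrow> (\<forall>S\<subseteq>B. card S \<le> sum c (neighbourhood A adj S))"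

definition capacitated_assignment ::
    "'a set \<Rightarrow> 'b set \<Rightarrow> ('a \<Rightarrow> 'b \<Rightarrow> bool) \<Rightarrow> ('a \<Rightarrow> nat) \<Rightarrow> ('b \<Rightarrow> 'a) \<Rightarrow> bool" where
  "capacitated_assignment A B adj c f \<longleftrightarrow>
     (\<forall>b\<in>B. f b \<in> A \<and> adj (f b) b) \<and> (\<forall>a. card {b\<in>B. f b = a} \<le> c a)"

lemma hall_condition_subset:
  "hall_condition A B adj c \<Longrightarrow> S \<subseteq> B \<Longrightarrow> hall_condition A S adj c"
  unfolding hall_condition_def by blast

lemma neighbourhood_Un:
  "neighbourhood A adj (S \<union> T) = neighbourhood A adj S \<union> (neighbourhood A adj T - neighbourhood A adj S)"
  unfolding neighbourhood_def by auto

lemma finite_neighbourhood: "finite A \<Longrightarrow> finite (neighbourhood A adj S)"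
  unfolding neighbourhood_def by simp

lemma sum_fun_upd_diff_le:
  assumes "finite X"
  shows "sum c X \<le> sum (c(a := c a - 1)) X + (1::nat)"
proof (cases "a \<in> X")
  case True
  have "sum (c(a := c a - 1)) (X - {a}) = sum c (X - {a})" by (rule sum.cong) auto
  with assms True show ?thesis by (simp add: sum.remove)
next
  case False
  then have "sum (c(a := c a - 1)) X = sum c X" by (intro sum.cong) auto
  then show ?thesis by simp
qed

text \<open>Once a tight set \<open>S\<close> is served by its own neighbourhood, the rest of \<open>B\<close> must
  be served by the remaining vertices.\<close>

lemma hall_condition_remove_tight:
  assumes fin: "finite A" "finite B" and hall: "hall_condition A B adj c"
    and S: "S \<subseteq> B" "card S = sum c (neighbourhood A adj S)"
  shows "hall_condition A (B - S) adj (\<lambda>a. if a \<in> neighbourhood A adj S then 0 else c a)"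
  unfolding hall_condition_def
proof (intro allI impI)
  let ?N = "neighbourhood A adj"
  fix T assume T: "T \<subseteq> B - S"
  have "finite S" "finite T" using S T fin finite_subset by blast+
  with T have "card T + card S = card (T \<union> S)" by (subst card_Un_disjoint) auto
  also have "\<dots> \<le> sum c (?N (T \<union> S))" using hall T S(1) unfolding hall_condition_def by blast
  also have "\<dots> = sum c (?N S) + sum c (?N T - ?N S)"
    unfolding Un_commute[of T S] neighbourhood_Un using fin
    by (subst sum.union_disjoint) (auto simp: finite_neighbourhood)
  finally have "card T \<le> sum c (?N T - ?N S)" using S(2) by simp
  also have "\<dots> = sum (\<lambda>a. if a \<in> ?N S then 0 else c a) (?N T)"
    using fin by (simp add: sum.If_cases Diff_eq finite_neighbourhood)
  finally show "card T \<le> sum (\<lambda>a. if a \<in> ?N S then 0 else c a) (?N T)" .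
qed

lemma capacitated_assignment_combine:
  assumes f1: "capacitated_assignment A S adj c f1"
    and f2: "capacitated_assignment A T adj (\<lambda>a. if a \<in> neighbourhood A adj S then 0 else c a) f2"
    and fin: "finite T" and disj: "S \<inter> T = {}"
  shows "capacitated_assignment A (S \<union> T) adj c (\<lambda>b. if b \<in> S then f1 b else f2 b)"
  unfolding capacitated_assignment_def
proof (intro conjI allI)
  show "\<forall>b\<in>S \<union> T. (if b \<in> S then f1 b else f2 b) \<in> A \<and> adj (if b \<in> S then f1 b else f2 b) b"
    using f1 f2 unfolding capacitated_assignment_def by auto
  fix a
  show "card {b \<in> S \<union> T. (if b \<in> S then f1 b else f2 b) = a} \<le> c a"
  proof (cases "a \<in> neighbourhood A adj S")
    case True
    have "card {b\<in>T. f2 b = a} \<le> (if a \<in> neighbourhood A adj S then 0 else c a)"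
      using f2 unfolding capacitated_assignment_def by blast
    with True have "card {b\<in>T. f2 b = a} = 0" by simp
    then have "{b\<in>T. f2 b = a} = {}" using fin by simp
    then have "{b \<in> S \<union> T. (if b \<in> S then f1 b else f2 b) = a} = {b\<in>S. f1 b = a}" by auto
    then show ?thesis using f1 unfolding capacitated_assignment_def by simp
  next
    case False
    then have "{b \<in> S \<union> T. (if b \<in> S then f1 b else f2 b) = a} = {b\<in>T. f2 b = a}"
      using f1 disj unfolding capacitated_assignment_def neighbourhood_def by auto
    moreover have "card {b\<in>T. f2 b = a} \<le> (if a \<in> neighbourhood A adj S then 0 else c a)"
      using f2 unfolding capacitated_assignment_def by blast
    ultimately show ?thesis using False by simp
  qed
qed

text \<open>Without tight sets every nonempty proper subset has slack, so one unit of capacity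
  can be spent on any single edge.\<close>

lemma hall_condition_remove_edge:
  assumes fin: "finite A" and hall: "hall_condition A B adj c" and b: "b \<in> B"
    and slack: "\<And>S. S \<noteq> {} \<Longrightarrow> S \<subset> B \<Longrightarrow> card S \<noteq> sum c (neighbourhood A adj S)"
    and a: "a \<in> neighbourhood A adj {b}"
  shows "hall_condition A (B - {b}) adj (c(a := c a - 1))"
  unfolding hall_condition_def
proof (intro allI impI)
  fix T assume T: "T \<subseteq> B - {b}"
  show "card T \<le> sum (c(a := c a - 1)) (neighbourhood A adj T)"
  proof (cases "T = {}")
    case False
    have "T \<subset> B" using T b by blast
    then have "card T \<le> sum c (neighbourhood A adj T)" using hall unfolding hall_condition_def by blast
    with slack[OF False \<open>T \<subset> B\<close>] have "card T < sum c (neighbourhood A adj T)" by simp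
    also have "\<dots> \<le> sum (c(a := c a - 1)) (neighbourhood A adj T) + 1"
      by (rule sum_fun_upd_diff_le[OF finite_neighbourhood[OF fin]])
    finally show ?thesis by simp
  qed simp
qed

lemma capacitated_assignment_insert:
  assumes f: "capacitated_assignment A (B - {b}) adj (c(a := c a - 1)) f"
    and fin: "finite B" and a: "a \<in> A" "adj a b" "c a > 0"
  shows "capacitated_assignment A B adj c (f(b := a))"
  unfolding capacitated_assignment_def
proof (intro conjI allI)
  show "\<forall>x\<in>B. (f(b := a)) x \<in> A \<and> adj ((f(b := a)) x) x"
    using f a unfolding capacitated_assignment_def by auto
  fix a'
  have fin': "finite {x\<in>B - {b}. f x = a'}" using fin by simp
  have "card {x\<in>B. (f(b := a)) x = a'} \<le> card {x\<in>B - {b}. f x = a'} + (if a' = a then 1 else 0)"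
  proof (cases "a' = a")
    case True
    then have "{x\<in>B. (f(b := a)) x = a'} \<subseteq> insert b {x\<in>B - {b}. f x = a'}" by auto
    then have "card {x\<in>B. (f(b := a)) x = a'} \<le> card (insert b {x\<in>B - {b}. f x = a'})"
      using fin' by (intro card_mono) auto
    also have "\<dots> \<le> card {x\<in>B - {b}. f x = a'} + 1" using fin' by (simp add: card_insert_if)
    finally show ?thesis using True by simp
  next
    case False
    then have "{x\<in>B. (f(b := a)) x = a'} = {x\<in>B - {b}. f x = a'}" by auto
    then show ?thesis using False by simp
  qed
  moreover have "card {x\<in>B - {b}. f x = a'} \<le> (c(a := c a - 1)) a'"
    using f unfolding capacitated_assignment_def by blast
  ultimately show "card {x\<in>B. (f(b := a)) x = a'} \<le> c a'" using a(3) by (cases "a' = a") auto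
qed

theorem capacitated_hall:
  assumes "finite A" "finite B" "hall_condition A B adj c"
  shows "\<exists>f. capacitated_assignment A B adj c f"
  using assms(2,3)
proof (induction "card B" arbitrary: B c rule: less_induct)
  case less
  show ?case
  proof (cases "\<exists>S. S \<noteq> {} \<and> S \<subset> B \<and> card S = sum c (neighbourhood A adj S)")
    case True
    then obtain S where S: "S \<noteq> {}" "S \<subset> B" "card S = sum c (neighbourhood A adj S)" by blast
    have "finite S" using S less.prems finite_subset by blast
    moreover have "card S < card B" using S less.prems by (intro psubset_card_mono) auto
    moreover have "hall_condition A S adj c" using hall_condition_subset[OF less.prems(2)] S by blast
    ultimately obtain f1 where f1: "capacitated_assignment A S adj c f1" using less.hyps by blast
    let ?c' = "\<lambda>a. if a \<in> neighbourhood A adj S then 0 else c a"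
    have "card (B - S) < card B" using S less.prems by (intro psubset_card_mono) auto
    moreover have "hall_condition A (B - S) adj ?c'"
      using hall_condition_remove_tight[OF assms(1) less.prems] S by blast
    moreover have "finite (B - S)" using less.prems by simp
    ultimately obtain f2 where "capacitated_assignment A (B - S) adj ?c' f2" using less.hyps by blast
    with f1 have "capacitated_assignment A (S \<union> (B - S)) adj c (\<lambda>b. if b \<in> S then f1 b else f2 b)"
      using less.prems by (intro capacitated_assignment_combine) auto
    moreover have "S \<union> (B - S) = B" using S by blast
    ultimately show ?thesis by metis
  next
    case no_tight: False
    show ?thesis
    proof (cases "B = {}")
      case True then show ?thesis by (auto simp: capacitated_assignment_def)
    next
      case False
      then obtain b where b: "b \<in> B" by blast
      have "card {b} \<le> sum c (neighbourhood A adj {b})"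
        using less.prems b unfolding hall_condition_def by blast
      then have "sum c (neighbourhood A adj {b}) \<noteq> 0" by simp
      then obtain a where a: "a \<in> neighbourhood A adj {b}" "c a > 0"
        using sum.neutral[of "neighbourhood A adj {b}" c] by (metis gr0I)
      have "card (B - {b}) < card B" using less.prems(1) b by (rule card_Diff1_less)
      moreover have "hall_condition A (B - {b}) adj (c(a := c a - 1))"
        by (rule hall_condition_remove_edge[OF assms(1) less.prems(2) b _ a(1)]) (use no_tight in blast)
      moreover have "finite (B - {b})" using less.prems by simp
      ultimately obtain f where f: "capacitated_assignment A (B - {b}) adj (c(a := c a - 1)) f"
        using less.hyps by blast
      moreover have "a \<in> A" "adj a b" using a(1) unfolding neighbourhood_def by auto
      ultimately show ?thesis using capacitated_assignment_insert[OF f less.prems(1) _ _ a(2)] by blast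
    qed
  qed
qed

section \<open>Integral assignments from fractional ones\<close>

lemma hall_condition_of_weights:
  fixes w :: "'a \<Rightarrow> 'b \<Rightarrow> nat"
  assumes fin: "finite A" "finite B"
    and rows: "\<And>a. a \<in> A \<Longrightarrow> (\<Sum>b\<in>B. w a b) = t * \<Delta>"
    and cols: "\<And>b. b \<in> B \<Longrightarrow> (\<Sum>a\<in>A. w a b) = \<Delta>" and "\<Delta> > 0"
  shows "hall_condition A B (\<lambda>a b. w a b > 0) (\<lambda>_. t)"
  unfolding hall_condition_def
proof (intro allI impI)
  fix S assume S: "S \<subseteq> B"
  define N where "N = neighbourhood A (\<lambda>a b. w a b > 0) S"
  have "\<Delta> * card S = (\<Sum>b\<in>S. \<Sum>a\<in>A. w a b)" using cols S by (simp add: subset_iff)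
  also have "\<dots> = (\<Sum>b\<in>S. \<Sum>a\<in>N. w a b)"
    using fin by (intro sum.cong refl sum.mono_neutral_cong_right) (auto simp: N_def neighbourhood_def)
  also have "\<dots> = (\<Sum>a\<in>N. \<Sum>b\<in>S. w a b)" by (rule sum.swap)
  also have "\<dots> \<le> (\<Sum>a\<in>N. \<Sum>b\<in>B. w a b)"
    using fin S by (intro sum_mono sum_mono2) auto
  also have "\<dots> = \<Delta> * (t * card N)" using rows by (simp add: N_def neighbourhood_def)
  finally show "card S \<le> sum (\<lambda>_. t) (neighbourhood A (\<lambda>a b. w a b > 0) S)"
    using \<open>\<Delta> > 0\<close> by (simp add: N_def mult.commute)
qed

lemma card_eq_of_weights:
  fixes w :: "'a \<Rightarrow> 'b \<Rightarrow> nat"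
  assumes "finite A" "finite B"
    and rows: "\<And>a. a \<in> A \<Longrightarrow> (\<Sum>b\<in>B. w a b) = t * \<Delta>"
    and cols: "\<And>b. b \<in> B \<Longrightarrow> (\<Sum>a\<in>A. w a b) = \<Delta>" and "\<Delta> > 0"
  shows "card B = t * card A"
proof -
  have "card A * (t * \<Delta>) = (\<Sum>a\<in>A. \<Sum>b\<in>B. w a b)" using rows by simp
  also have "\<dots> = (\<Sum>b\<in>B. \<Sum>a\<in>A. w a b)" by (rule sum.swap)
  also have "\<dots> = card B * \<Delta>" using cols by simp
  finally show ?thesis using \<open>\<Delta> > 0\<close> by (simp add: mult.commute)
qed

lemma capacitated_assignment_fibres_eq:
  assumes f: "capacitated_assignment A B adj (\<lambda>_. t) f"
    and fin: "finite A" "finite B" and card: "card B = t * card A" and a: "a \<in> A"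
  shows "card {b\<in>B. f b = a} = t"
proof -
  have le: "\<And>a. card {b\<in>B. f b = a} \<le> t" using f unfolding capacitated_assignment_def by blast
  have "(\<Sum>a\<in>A. card {b\<in>B. f b = a}) = card B"
    using sum.group[OF fin(2,1), of f "\<lambda>_. 1::nat"] f
    by (simp add: capacitated_assignment_def image_subset_iff)
  also have "\<dots> = (\<Sum>a\<in>A. t)" using card by (simp add: mult.commute)
  finally have sums: "(\<Sum>a\<in>A. card {b\<in>B. f b = a}) = (\<Sum>a\<in>A. t)" .
  show ?thesis
  proof (rule ccontr)
    assume "card {b\<in>B. f b = a} \<noteq> t"
    with le[of a] have "card {b\<in>B. f b = a} < t" by simp
    with le a have "(\<Sum>a\<in>A. card {b\<in>B. f b = a}) < (\<Sum>a\<in>A. t)"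
      by (intro sum_strict_mono_ex1[OF fin(1)]) auto
    with sums show False by simp
  qed
qed

section \<open>Dissolutions and star partitions\<close>

definition cut_weight :: "'a set \<Rightarrow> 'a set \<Rightarrow> 'a set set \<Rightarrow> ('a \<Rightarrow> 'a \<Rightarrow> nat) \<Rightarrow> 'a \<Rightarrow> 'a \<Rightarrow> nat" where
  "cut_weight D V E z a b = (if (a, b) \<in> Z D V E then z a b else 0)"

lemma cut_weight_pos_edge: "cut_weight D V E z a b > 0 \<Longrightarrow> {a, b} \<in> E"
  by (simp add: cut_weight_def Z_def split: if_splits)

lemma dissolution_cut_weight_out:
  assumes "finite V" "dissolution V E s \<Delta> D z" "a \<in> D"
  shows "(\<Sum>b\<in>V - D. cut_weight D V E z a b) = s"
proof -
  have "(\<Sum>b\<in>V - D. cut_weight D V E z a b) = (\<Sum>b\<in>{b. (a, b) \<in> Z D V E}. z a b)"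
    using assms(1) by (intro sum.mono_neutral_cong_right) (auto simp: cut_weight_def Z_def)
  then show ?thesis using assms(2,3) unfolding dissolution_def by simp
qed

lemma dissolution_cut_weight_in:
  assumes "finite V" "dissolution V E s \<Delta> D z" "b \<in> V - D"
  shows "(\<Sum>a\<in>D. cut_weight D V E z a b) = \<Delta>"
proof -
  have "finite D" using assms(1,2) finite_subset unfolding dissolution_def by blast
  then have "(\<Sum>a\<in>D. cut_weight D V E z a b) = (\<Sum>a\<in>{a. (a, b) \<in> Z D V E}. z a b)"
    by (intro sum.mono_neutral_cong_right) (auto simp: cut_weight_def Z_def)
  then show ?thesis using assms(2,3) unfolding dissolution_def by simp
qed

lemma star_partition_of_assignment:
  assumes D: "D \<subseteq> V" and fin: "finite V"
    and f: "\<And>b. b \<in> V - D \<Longrightarrow> f b \<in> D \<and> {f b, b} \<in> E"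
    and fibres: "\<And>a. a \<in> D \<Longrightarrow> card {b\<in>V - D. f b = a} = t"
  shows "star_partition V E t ((\<lambda>a. insert a {b\<in>V - D. f b = a}) ` D)"
  unfolding star_partition_def
proof
  show "partition_on V ((\<lambda>a. insert a {b\<in>V - D. f b = a}) ` D)"
  proof (rule partition_onI)
    show "\<Union> ((\<lambda>a. insert a {b\<in>V - D. f b = a}) ` D) = V"
      using D f by blast
  qed (auto simp: disjnt_def)
  show "\<forall>W\<in>(\<lambda>a. insert a {b\<in>V - D. f b = a}) ` D. contains_star E t W"
  proof
    fix W assume "W \<in> (\<lambda>a. insert a {b\<in>V - D. f b = a}) ` D"
    then obtain a where a: "a \<in> D" "W = insert a {b\<in>V - D. f b = a}" by blast
    have "card W = t + 1" using a fibres[OF a(1)] fin by (simp add: card_insert_if)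
    moreover have "\<forall>w\<in>W - {a}. {a, w} \<in> E" using a f by auto
    ultimately show "contains_star E t W" unfolding contains_star_def using a(2) by blast
  qed
qed

lemma star_partition_of_dissolution:
  assumes "finite V" "dissolution V E (t * \<Delta>) \<Delta> D z" "\<Delta> > 0"
  shows "has_star_partition V E t"
proof -
  let ?w = "cut_weight D V E z"
  have D: "D \<subseteq> V" using assms(2) unfolding dissolution_def by blast
  with assms(1) have "finite D" by (rule finite_subset[rotated])
  note weights = \<open>finite D\<close> finite_Diff[OF \<open>finite V\<close>]
    dissolution_cut_weight_out[OF assms(1,2)] dissolution_cut_weight_in[OF assms(1,2)] \<open>\<Delta> > 0\<close>
  from capacitated_hall[OF weights(1,2) hall_condition_of_weights[OF weights]]
  obtain f where f: "capacitated_assignment D (V - D) (\<lambda>a b. ?w a b > 0) (\<lambda>_. t) f" ..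
  have "f b \<in> D \<and> {f b, b} \<in> E" if "b \<in> V - D" for b
  proof -
    have "f b \<in> D \<and> ?w (f b) b > 0" using f that unfolding capacitated_assignment_def by blast
    then show ?thesis using cut_weight_pos_edge[of D V E z "f b" b] by blast
  qed
  moreover have "card {b\<in>V - D. f b = a} = t" if "a \<in> D" for a
    using capacitated_assignment_fibres_eq[OF f weights(1,2) card_eq_of_weights[OF weights] that] .
  ultimately have "star_partition V E t ((\<lambda>a. insert a {b\<in>V - D. f b = a}) ` D)"
    by (rule star_partition_of_assignment[OF D assms(1)])
  then show ?thesis unfolding has_star_partition_def ..
qed

lemma star_partition_centres:
  assumes "star_partition V E t P"
  obtains cen where "\<And>W. W \<in> P \<Longrightarrow> cen W \<in> W \<and> (\<forall>w\<in>W - {cen W}. {cen W, w} \<in> E)"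
  using assms unfolding star_partition_def contains_star_def by metis

lemma dissolution_of_star_partition:
  fixes \<Delta> :: nat
  assumes fin: "finite V" and "t > 0" and P: "star_partition V E t P"
    and cen: "\<And>W. W \<in> P \<Longrightarrow> cen W \<in> W \<and> (\<forall>w\<in>W - {cen W}. {cen W, w} \<in> E)"
  defines "z \<equiv> \<lambda>a b. if \<exists>W\<in>P. a = cen W \<and> b \<in> W then \<Delta> else 0"
  shows "dissolution V E (t * \<Delta>) \<Delta> (cen ` P) z"
proof -
  let ?D = "cen ` P"
  have part: "partition_on V P" and card: "\<And>W. W \<in> P \<Longrightarrow> card W = t + 1"
    using P unfolding star_partition_def contains_star_def by auto
  have uniq: "W = W'" if "W \<in> P" "W' \<in> P" "x \<in> W" "x \<in> W'" for W W' x
    using part that unfolding partition_on_def disjoint_def by blast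
  have WV: "W \<subseteq> V" if "W \<in> P" for W using part that unfolding partition_on_def by blast
  have z_cen: "z (cen W) b = (if b \<in> W then \<Delta> else 0)" if "W \<in> P" for W b
    using that cen uniq unfolding z_def by metis
  have leaf: "w \<in> V - ?D" if "W \<in> P" "w \<in> W" "w \<noteq> cen W" for W w
    using that cen uniq WV by blast
  have fin_out: "finite {v. (a, v) \<in> Z ?D V E}" and fin_in: "finite {v. (v, b) \<in> Z ?D V E}" for a b
    by (rule finite_subset[OF _ fin], use cen WV in \<open>auto simp: Z_def\<close>)+
  have out: "(\<Sum>v \<in> {v. (cen W, v) \<in> Z ?D V E}. z (cen W) v) = t * \<Delta>" if W: "W \<in> P" for W
  proof -
    have "{v. (cen W, v) \<in> Z ?D V E} \<inter> W = W - {cen W}"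
      using W cen leaf unfolding Z_def by auto
    moreover have "card (W - {cen W}) = t" using card W cen by simp
    ultimately show ?thesis using z_cen[OF W] fin_out by (simp add: sum.If_cases)
  qed
  have into: "(\<Sum>v' \<in> {v'. (v', v) \<in> Z ?D V E}. z v' v) = \<Delta>" if v: "v \<in> V - ?D" for v
  proof -
    obtain W where W: "W \<in> P" "v \<in> W" using part v unfolding partition_on_def by blast
    then have "z v' v = (if v' = cen W then \<Delta> else 0)" for v'
      using cen uniq unfolding z_def by metis
    moreover have "cen W \<in> {v'. (v', v) \<in> Z ?D V E}" using W v cen unfolding Z_def by auto
    ultimately show ?thesis using fin_in by simp
  qed
  show ?thesis
    unfolding dissolution_def using cen WV \<open>t > 0\<close> out into by (auto simp: z_def)
qed

theorem proposition1:
  fixes V :: "'a set" and E :: "'a set set" and t \<Delta> :: nat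
  assumes "graph V E" and "t > 0" and "\<Delta> > 0"
  shows "has_dissolution V E (t * \<Delta>) \<Delta> \<longleftrightarrow> has_star_partition V E t"
proof
  have "finite V" using \<open>graph V E\<close> unfolding graph_def by simp
  then show "has_dissolution V E (t * \<Delta>) \<Delta> \<Longrightarrow> has_star_partition V E t"
    using star_partition_of_dissolution \<open>\<Delta> > 0\<close> unfolding has_dissolution_def by blast
  assume "has_star_partition V E t"
  then obtain P where P: "star_partition V E t P" unfolding has_star_partition_def by blast
  obtain cen where "\<And>W. W \<in> P \<Longrightarrow> cen W \<in> W \<and> (\<forall>w\<in>W - {cen W}. {cen W, w} \<in> E)"
    using star_partition_centres[OF P] by blast
  with \<open>finite V\<close> \<open>t > 0\<close> P show "has_dissolution V E (t * \<Delta>) \<Delta>"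
    unfolding has_dissolution_def by (blast intro: dissolution_of_star_partition)
qed

end
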